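(* Let $r\ge2$ and $p\ge2$ be integers, $\mathcal{A}$ the adjacency tensor of an $r$-uniform (possibly weighted) hypergraph on $n$ vertices, and $f(\mathbf{x})=(r-1)!\,\mathcal{A}\mathbf{x}^r/\|\mathbf{x}\|_p^r$. Suppose the sequence $\{\mathbf{x}_k\}$ is generated by the CSRH iteration (described in the context) from an arbitrary unit vector $\mathbf{x}_0\in\mathbb{S}^{n-1}$, that it is infinite, and that $\nabla f(\mathbf{x}_k)\neq0$ for all $k$. Then $$\lim_{k\to\infty}\|\nabla f(\mathbf{x}_k)\|=0.$$
   Context: $\mathbb{S}^{n-1}=\{\mathbf{x}\in\mathbb{R}^n:\mathbf{x}^\top\mathbf{x}=1\}$. Adjacency tensor: for a weighted $r$-uniform hypergraph with vertex set $\{1,\dots,n\}$ and edge weights $s(e)>0$, $\mathcal{A}=(a_{i_1\cdots i_r})$ is symmetric with $a_{i_1\cdots i_r}=s(e)/(r-1)!$ if $\{i_1,\dots,i_r\}=e$ is an edge and $0$ otherwise; $\mathcal{A}\mathbf{x}^r=\sum a_{i_1\cdots i_r}x_{i_1}\cdots x_{i_r}$, $(\mathcal{A}\mathbf{x}^{r-1})_i=\sum a_{ii_2\cdots i_r}x_{i_2}\cdots x_{i_r}$, $\|\mathbf{x}\|_p=(\sum|x_i|^p)^{1/p}$, $\|\cdot\|$ Euclidean. $\nabla f(\mathbf{x})=\frac{r!}{\|\mathbf{x}\|_p^r}(\mathcal{A}\mathbf{x}^{r-1}-\mathcal{A}\mathbf{x}^r\|\mathbf{x}\|_p^{-p}\mathbf{x}^{\langle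 p-1\rangle})$ with $(\mathbf{x}^{\langle p-1\rangle})_i=|x_i|^{p-1}\mathrm{sgn}(x_i)$. CSRH iteration: fix $0<c_1<c_2<1$, $\tfrac14<\tau<1$, $\epsilon>0$, a unit vector $\mathbf{x}_0$, and $\mathbf{p}_0=\nabla f(\mathbf{x}_0)$. At step $k$, with $\mathbf{x}_{k+1}(\alpha)=\frac{[(2-\alpha\mathbf{x}_k^\top\mathbf{p}_k)^2-\|\alpha\mathbf{p}_k\|^2]\mathbf{x}_k+4\alpha\mathbf{p}_k}{4+\|\alpha\mathbf{p}_k\|^2-(\alpha\mathbf{x}_k^\top\mathbf{p}_k)^2}$, choose $\alpha_k>0$ with $f(\mathbf{x}_{k+1}(\alpha_k))\ge f(\mathbf{x}_k)+c_1\alpha_k\nabla f(\mathbf{x}_k)^\top\mathbf{p}_k$ and $\nabla f(\mathbf{x}_{k+1}(\alpha_k))^\top\mathbf{p}_k\le c_2\nabla f(\mathbf{x}_k)^\top\mathbf{p}_k$; set $\mathbf{x}_{k+1}=\mathbf{x}_{k+1}(\alpha_k)$, $\mathbf{d}_k=\mathbf{x}_{k+1}-\mathbf{x}_k$, $\mathbf{y}_k=\nabla f(\mathbf{x}_{k+1})-\nabla f(\mathbf{x}_k)$, $\beta_k=\max(0,\tilde\beta_k)$ where $\tilde\beta_k=(\tau\mathbf{d}_k\|\mathbf{y}_k\|^2/(\mathbf{d}_k^\top\mathbf{y}_k)-\mathbf{y}_k)^\top\nabla f(\mathbf{x}_{k+1})/(\mathbf{d}_k^\top\mathbf{y}_k)$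 if $|\mathbf{d}_k^\top\mathbf{y}_k|\ge\epsilon\|\mathbf{d}_k\|\|\mathbf{y}_k\|$ and $\tilde\beta_k=0$ otherwise, and $\mathbf{p}_{k+1}=\nabla f(\mathbf{x}_{k+1})+\beta_k\mathbf{d}_k$. *)

theory Defs
  imports "HOL-Analysis.Analysis"
begin

text \<open>Vertices of the hypergraph are the elements of the finite type 'n (so n = CARD('n)),
  vectors of R^n are elements of real ^ 'n. A weighted r-uniform hypergraph is given by an
  edge set E (each edge an r-element set of vertices) and weights s e > 0 on edges.\<close>

definition tuples :: "nat \<Rightarrow> ('n::finite) list set" where
  "tuples m = {is. length is = m}"

definition adj_entry :: "('n::finite) set set \<Rightarrow> ('n set \<Rightarrow> real) \<Rightarrow> nat \<Rightarrow> 'n list \<Rightarrow> real" where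
  "adj_entry E s r is = (if set is \<in> E then s (set is) / fact (r - 1) else 0)"

definition tensor_form :: "('n::finite) set set \<Rightarrow> ('n set \<Rightarrow> real) \<Rightarrow> nat \<Rightarrow> real ^ 'n \<Rightarrow> real" where
  "tensor_form E s r x =
     (\<Sum>is\<in>tuples r. adj_entry E s r is * (\<Prod>j<r. x $ (is ! j)))"

definition tensor_vec :: "('n::finite) set set \<Rightarrow> ('n set \<Rightarrow> real) \<Rightarrow> nat \<Rightarrow> real ^ 'n \<Rightarrow> real ^ 'n" where
  "tensor_vec E s r x = (\<chi> i.
     (\<Sum>is\<in>tuples (r - 1). adj_entry E s r (i # is) * (\<Prod>j<r - 1. x $ (is ! j))))"

definition pnorm :: "nat \<Rightarrow> real ^ ('n::finite) \<Rightarrow> real" where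
  "pnorm p x = (\<Sum>i\<in>UNIV. \<bar>x $ i\<bar> ^ p) powr (1 / real p)"

definition fobj :: "('n::finite) set set \<Rightarrow> ('n set \<Rightarrow> real) \<Rightarrow> nat \<Rightarrow> nat \<Rightarrow> real ^ 'n \<Rightarrow> real" where
  "fobj E s r p x = fact (r - 1) * tensor_form E s r x / pnorm p x ^ r"

definition gradf :: "('n::finite) set set \<Rightarrow> ('n set \<Rightarrow> real) \<Rightarrow> nat \<Rightarrow> nat \<Rightarrow> real ^ 'n \<Rightarrow> real ^ 'n" where
  "gradf E s r p x = (fact r / pnorm p x ^ r) *\<^sub>R
     (tensor_vec E s r x - (tensor_form E s r x * pnorm p x powr (- real p)) *\<^sub>R
        (\<chi> i. \<bar>x $ i\<bar> ^ (p - 1) * sgn (x $ i)))"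

definition csrh_step :: "real ^ ('n::finite) \<Rightarrow> real ^ 'n \<Rightarrow> real \<Rightarrow> real ^ 'n" where
  "csrh_step x d \<alpha> =
     (1 / (4 + (norm (\<alpha> *\<^sub>R d))\<^sup>2 - (\<alpha> * (x \<bullet> d))\<^sup>2)) *\<^sub>R
       (((2 - \<alpha> * (x \<bullet> d))\<^sup>2 - (norm (\<alpha> *\<^sub>R d))\<^sup>2) *\<^sub>R x + (4 * \<alpha>) *\<^sub>R d)"

text \<open>beta_k = max 0 tilde-beta_k, with d = d_k, y = y_k, g = grad f(x_{k+1}).\<close>
definition csrh_beta :: "real \<Rightarrow> real \<Rightarrow> real ^ ('n::finite) \<Rightarrow> real ^ 'n \<Rightarrow> real ^ 'n \<Rightarrow> real" where
  "csrh_beta \<tau> \<epsilon> d y g = max 0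
     (if \<bar>d \<bullet> y\<bar> \<ge> \<epsilon> * norm d * norm y
      then (((\<tau> * (norm y)\<^sup>2 / (d \<bullet> y)) *\<^sub>R d - y) \<bullet> g) / (d \<bullet> y)
      else 0)"

definition csrh_run :: "('n::finite) set set \<Rightarrow> ('n set \<Rightarrow> real) \<Rightarrow> nat \<Rightarrow> nat \<Rightarrow>
    real \<Rightarrow> real \<Rightarrow> real \<Rightarrow> real \<Rightarrow>
    (nat \<Rightarrow> real ^ 'n) \<Rightarrow> (nat \<Rightarrow> real) \<Rightarrow> (nat \<Rightarrow> real ^ 'n) \<Rightarrow> bool" where
  "csrh_run E s r p c1 c2 \<tau> \<epsilon> x \<alpha> pd \<longleftrightarrow>
     norm (x 0) = 1 \<and>
     pd 0 = gradf E s r p (x 0) \<and>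
     (\<forall>k. \<alpha> k > 0 \<and>
        fobj E s r p (csrh_step (x k) (pd k) (\<alpha> k))
          \<ge> fobj E s r p (x k) + c1 * \<alpha> k * (gradf E s r p (x k) \<bullet> pd k) \<and>
        gradf E s r p (csrh_step (x k) (pd k) (\<alpha> k)) \<bullet> pd k
          \<le> c2 * (gradf E s r p (x k) \<bullet> pd k) \<and>
        x (Suc k) = csrh_step (x k) (pd k) (\<alpha> k) \<and>
        pd (Suc k) = gradf E s r p (x (Suc k)) +
          csrh_beta \<tau> \<epsilon> (x (Suc k) - x k)
             (gradf E s r p (x (Suc k)) - gradf E s r p (x k))
             (gradf E s r p (x (Suc k))) *\<^sub>R (x (Suc k) - x k))"

end

theory Submission
  imports Defs
begin

text \<open>The curvilinear step keeps the iterates on the unit sphere and moves them by at most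
  \<open>\<alpha>\<^sub>k \<parallel>p\<^sub>k\<parallel>\<close>. Since \<open>\<tau> > 1/4\<close>, an AM-GM estimate on \<open>\<beta>\<^sub>k\<close> gives the sufficient ascent condition \<open>\<nabla>f(x\<^sub>k)\<^sup>T p\<^sub>k \<ge> (1 - 1/(4\<tau>)) \<parallel>\<nabla>f(x\<^sub>k)\<parallel>\<^sup>2\<close>, and the
  \<open>\<epsilon>\<close>-safeguard gives \<open>\<parallel>p\<^sub>k\<parallel> \<le> M \<parallel>\<nabla>f(x\<^sub>k)\<parallel>\<close>. As \<open>f\<close> is bounded on the compact sphere, the
  Armijo condition makes \<open>\<Sum> \<alpha>\<^sub>k \<parallel>\<nabla>f(x\<^sub>k)\<parallel>\<^sup>2\<close> finite. Finally the curvature condition bounds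
  \<open>\<parallel>\<nabla>f(x\<^sub>k)\<parallel>\<close> by a multiple of \<open>\<parallel>\<nabla>f(x\<^sub>k\<^sub>+\<^sub>1) - \<nabla>f(x\<^sub>k)\<parallel>\<close>, which is small by uniform continuity
  of \<open>\<nabla>f\<close> on the sphere whenever \<open>\<parallel>\<nabla>f(x\<^sub>k)\<parallel>\<close> is not already small.\<close>

lemma summable_of_bounded_ascent:
  fixes v a :: "nat \<Rightarrow> real"
  assumes ascent: "\<And>k. v k + a k \<le> v (Suc k)" and "\<And>k. 0 \<le> a k" and "\<And>k. v k \<le> B"
  shows "summable a"
proof (rule summableI_nonneg_bounded)
  fix n
  have "v 0 + (\<Sum>k<n. a k) \<le> v n"
  proof (induction n)
    case (Suc n)
    then show ?case using ascent[of n] by simp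
  qed simp
  then show "sum a {..<n} \<le> B - v 0" using assms(3)[of n] by simp
qed fact

lemma curvature_gradient_change_ge:
  fixes g g' p :: "'a::real_inner"
  assumes ascent: "\<theta> * (norm g)\<^sup>2 \<le> g \<bullet> p" and bound: "norm p \<le> M * norm g"
    and curvature: "g' \<bullet> p \<le> c2 * (g \<bullet> p)" and "c2 \<le> 1" "0 \<le> M"
  shows "(1 - c2) * \<theta> * norm g \<le> M * norm (g' - g)"
proof (cases "g = 0")
  case False
  have "(1 - c2) * \<theta> * norm g * norm g \<le> (1 - c2) * (g \<bullet> p)"
    using ascent \<open>c2 \<le> 1\<close> mult_left_mono by (fastforce simp: power2_eq_square mult.assoc)
  also have "\<dots> \<le> (g - g') \<bullet> p" using curvature by (simp add: inner_diff_left algebra_simps)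
  also have "\<dots> \<le> norm (g' - g) * norm p"
    using norm_cauchy_schwarz[of "g - g'" p] by (simp add: norm_minus_commute)
  also have "\<dots> \<le> M * norm (g' - g) * norm g"
    using bound mult_left_mono[OF bound, of "norm (g' - g)"] by (simp add: mult_ac)
  finally show ?thesis using False by simp
qed (use assms in simp)

lemma gradient_tendsto_zero_of_curvature:
  fixes G :: "'a::real_inner \<Rightarrow> 'a" and x pd :: "nat \<Rightarrow> 'a" and \<alpha> :: "nat \<Rightarrow> real"
  assumes G: "uniformly_continuous_on K G" and x: "\<And>k. x k \<in> K"
    and "0 < \<theta>" "c2 < 1" "0 < M"
    and summable: "summable (\<lambda>k. \<alpha> k * (norm (G (x k)))\<^sup>2)"
    and ascent: "\<And>k. \<theta> * (norm (G (x k)))\<^sup>2 \<le> G (x k) \<bullet> pd k"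
    and bound: "\<And>k. norm (pd k) \<le> M * norm (G (x k))"
    and curvature: "\<And>k. G (x (Suc k)) \<bullet> pd k \<le> c2 * (G (x k) \<bullet> pd k)"
    and step: "\<And>k. norm (x (Suc k) - x k) \<le> \<alpha> k * norm (pd k)"
    and \<alpha>: "\<And>k. 0 < \<alpha> k"
  shows "(\<lambda>k. norm (G (x k))) \<longlonglongrightarrow> 0"
proof (rule LIMSEQ_I)
  fix e :: real
  assume "0 < e"
  define \<kappa> where "\<kappa> = (1 - c2) * \<theta>"
  have "0 < \<kappa>" using assms by (simp add: \<kappa>_def)
  have change: "\<kappa> * norm (G (x k)) \<le> M * norm (G (x (Suc k)) - G (x k))" for k
    unfolding \<kappa>_def using assms
    by (intro curvature_gradient_change_ge[OF ascent bound curvature]) auto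
  obtain \<eta> where "0 < \<eta>" and \<eta>: "\<And>u v. u \<in> K \<Longrightarrow> v \<in> K \<Longrightarrow> dist v u < \<eta> \<Longrightarrow>
      dist (G v) (G u) < \<kappa> * e / M"
    using G \<open>0 < \<kappa>\<close> \<open>0 < e\<close> \<open>0 < M\<close> unfolding uniformly_continuous_on_def
    by (metis divide_pos_pos mult_pos_pos)
  obtain N where N: "\<And>k. N \<le> k \<Longrightarrow> \<alpha> k * (norm (G (x k)))\<^sup>2 < \<eta> * e / M"
    using LIMSEQ_D[OF summable_LIMSEQ_zero[OF summable], of "\<eta> * e / M"]
      \<open>0 < \<eta>\<close> \<open>0 < e\<close> \<open>0 < M\<close> \<alpha> by fastforce
  have "norm (G (x k)) < e" if "N \<le> k" for k
  proof (rule ccontr)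
    assume "\<not> norm (G (x k)) < e"
    then have large: "e \<le> norm (G (x k))" by simp
    have "norm (x (Suc k) - x k) \<le> \<alpha> k * (M * norm (G (x k)))"
      using step[of k] bound[of k] \<alpha>[of k] by (meson less_imp_le mult_left_mono order_trans)
    also have "\<dots> \<le> M / e * (\<alpha> k * (norm (G (x k)))\<^sup>2)"
      using large \<open>0 < e\<close> \<open>0 < M\<close> \<alpha>[of k] mult_right_mono[OF large, of "\<alpha> k * M * norm (G (x k))"]
      by (simp add: field_simps power2_eq_square)
    also have "\<dots> < \<eta>"
      using N[OF that] \<open>0 < e\<close> \<open>0 < M\<close> by (simp add: field_simps)
    finally have "norm (G (x (Suc k)) - G (x k)) < \<kappa> * e / M"
      using \<eta>[OF x x] by (simp add: dist_norm)
    then have "\<kappa> * norm (G (x k)) < \<kappa> * e"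
      using change[of k] \<open>0 < M\<close> by (simp add: field_simps)
    then show False using large \<open>0 < \<kappa>\<close> by simp
  qed
  then show "\<exists>N. \<forall>k\<ge>N. norm (norm (G (x k)) - 0) < e" by auto
qed

lemma csrh_step_gap_nonneg:
  fixes x d :: "real ^ 'n::finite" and a :: real
  assumes "norm x = 1"
  shows "0 \<le> (norm (a *\<^sub>R d))\<^sup>2 - (a * (x \<bullet> d))\<^sup>2"
proof -
  have "\<bar>a * (x \<bullet> d)\<bar> \<le> norm (a *\<^sub>R d)"
    using Cauchy_Schwarz_ineq2[of x "a *\<^sub>R d"] assms by (simp add: abs_mult)
  then show ?thesis
    by (metis abs_ge_zero diff_ge_0_iff_ge power2_abs power_mono)
qed

lemma csrh_step_eq:
  fixes x d :: "real ^ 'n::finite" and a :: real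
  defines "w \<equiv> (norm (a *\<^sub>R d))\<^sup>2 - (a * (x \<bullet> d))\<^sup>2"
  shows "csrh_step x d a = (1 / (4 + w)) *\<^sub>R ((4 - 4 * (a * (x \<bullet> d)) - w) *\<^sub>R x + (4 * a) *\<^sub>R d)"
  unfolding csrh_step_def w_def by (simp add: power2_eq_square algebra_simps)

lemma norm_csrh_step:
  fixes x d :: "real ^ 'n::finite" and a :: real
  assumes x: "norm x = 1"
  shows "norm (csrh_step x d a) = 1"
proof -
  define C where "C = a * (x \<bullet> d)"
  define w where "w = (norm (a *\<^sub>R d))\<^sup>2 - C\<^sup>2"
  have w: "0 \<le> w" using csrh_step_gap_nonneg[OF x] by (simp add: w_def C_def)
  have xx: "x \<bullet> x = 1" and dd: "(a *\<^sub>R d) \<bullet> (a *\<^sub>R d) = w + C\<^sup>2"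
    using x by (simp_all add: w_def dot_square_norm)
  have "(norm ((4 - 4 * C - w) *\<^sub>R x + 4 *\<^sub>R (a *\<^sub>R d)))\<^sup>2 = (4 - w)\<^sup>2 + 16 * w"
    unfolding power2_norm_eq_inner using xx dd
    by (simp add: inner_commute C_def power2_eq_square algebra_simps)
  also have "\<dots> = (4 + w)\<^sup>2" by (simp add: power2_eq_square algebra_simps)
  finally have "norm ((4 - 4 * C - w) *\<^sub>R x + 4 *\<^sub>R (a *\<^sub>R d)) = 4 + w"
    using w by simp
  then show ?thesis
    using w csrh_step_eq[of x d a] by (simp add: C_def w_def mult.assoc)
qed

lemma norm_csrh_step_diff_le:
  fixes x d :: "real ^ 'n::finite" and a :: real
  assumes x: "norm x = 1"
  shows "norm (csrh_step x d a - x) \<le> \<bar>a\<bar> * norm d"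
proof -
  define C where "C = a * (x \<bullet> d)"
  define w where "w = (norm (a *\<^sub>R d))\<^sup>2 - C\<^sup>2"
  have w: "0 \<le> w" using csrh_step_gap_nonneg[OF x] by (simp add: w_def C_def)
  have xx: "x \<bullet> x = 1" using x by (simp add: dot_square_norm)
  have step: "csrh_step x d a = (1 / (4 + w)) *\<^sub>R ((4 - 4 * C - w) *\<^sub>R x + (4 * a) *\<^sub>R d)"
    using csrh_step_eq[of x d a] unfolding C_def[symmetric] w_def[symmetric] .
  have "x \<bullet> csrh_step x d a = ((4 - 4 * C - w) + 4 * a * (x \<bullet> d)) / (4 + w)"
    unfolding step using xx by (simp add: inner_add_right)
  also have "\<dots> = (4 - w) / (4 + w)" by (simp add: C_def)
  finally have "x \<bullet> csrh_step x d a = (4 - w) / (4 + w)" .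
  moreover have "(norm (csrh_step x d a - x))\<^sup>2 = 2 - 2 * (x \<bullet> csrh_step x d a)"
    using dot_norm_neg[of x "csrh_step x d a"] norm_csrh_step[OF x, of d a] x
    by (simp add: norm_minus_commute)
  ultimately have "(norm (csrh_step x d a - x))\<^sup>2 = 2 - 2 * ((4 - w) / (4 + w))" by simp
  also have "\<dots> = 4 * w / (4 + w)" using w by (simp add: field_simps)
  also have "\<dots> \<le> w" using w by (simp add: field_simps)
  also have "\<dots> \<le> (\<bar>a\<bar> * norm d)\<^sup>2" by (simp add: w_def power_mult_distrib)
  finally show ?thesis by (rule power2_le_imp_le) simp
qed

lemma continuous_on_tensor_form: "continuous_on S (tensor_form E s r)"
  unfolding tensor_form_def by (intro continuous_intros)

lemma continuous_on_tensor_vec: "continuous_on S (tensor_vec E s r)"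
  unfolding tensor_vec_def by (intro continuous_intros)

lemma pnorm_pos:
  assumes "x \<noteq> 0" "0 < p"
  shows "0 < pnorm p x"
proof -
  obtain i where "x $ i \<noteq> 0" using assms(1) by (metis vec_eq_iff zero_index)
  then have "0 < (\<Sum>i\<in>UNIV. \<bar>x $ i\<bar> ^ p)" by (intro sum_pos2[where i = i]) auto
  then show ?thesis unfolding pnorm_def by simp
qed

lemma continuous_on_pnorm:
  assumes "0 < p"
  shows "continuous_on (- {0}) (pnorm p :: real ^ 'n::finite \<Rightarrow> real)"
  unfolding pnorm_def[abs_def]
proof (intro continuous_intros ballI)
  fix x :: "real ^ 'n" assume "x \<in> - {0}"
  then show "(\<Sum>i\<in>UNIV. \<bar>x $ i\<bar> ^ p) \<noteq> 0"
    using pnorm_pos[of x p] assms by (auto simp: pnorm_def)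
qed

lemma abs_power_pred_mult_sgn:
  assumes "2 \<le> p"
  shows "\<bar>t::real\<bar> ^ (p - 1) * sgn t = t * \<bar>t\<bar> ^ (p - 2)"
proof -
  obtain q where q: "p = q + 2" using assms by (metis add.commute le_Suc_ex)
  show ?thesis unfolding q by (cases "t > 0"; cases "t = 0") (auto simp: sgn_if)
qed

lemma continuous_on_fobj:
  assumes "0 < p"
  shows "continuous_on (- {0}) (fobj E s r p :: real ^ 'n::finite \<Rightarrow> real)"
proof -
  have "pnorm p x \<noteq> 0" if "x \<in> - {0}" for x :: "real ^ 'n"
    using that pnorm_pos[OF _ assms, of x] by simp
  then show ?thesis
    unfolding fobj_def[abs_def]
    by (intro continuous_intros continuous_on_tensor_form continuous_on_pnorm[OF assms]) simp
qed

lemma continuous_on_gradf: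
  assumes "2 \<le> p"
  shows "continuous_on (- {0}) (gradf E s r p :: real ^ 'n::finite \<Rightarrow> real ^ 'n)"
proof -
  \<comment> \<open>\<open>sgn\<close> is discontinuous at 0; for \<open>p \<ge> 2\<close> the factor \<open>\<bar>t\<bar>\<^sup>p\<^sup>-\<^sup>1 sgn t\<close> is the continuous \<open>t \<bar>t\<bar>\<^sup>p\<^sup>-\<^sup>2\<close>.\<close>
  have eq: "gradf E s r p = (\<lambda>x. (fact r / pnorm p x ^ r) *\<^sub>R
      (tensor_vec E s r x - (tensor_form E s r x * pnorm p x powr (- real p)) *\<^sub>R
        (\<chi> i. x $ i * \<bar>x $ i\<bar> ^ (p - 2))))"
    unfolding gradf_def[abs_def] using abs_power_pred_mult_sgn[OF assms] by simp
  have "0 < p" using assms by simp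
  then have pnorm_eq_0: "x = 0" if "pnorm p x = 0" for x :: "real ^ 'n"
    using that pnorm_pos[of x p] by fastforce
  show ?thesis
    unfolding eq
    by (intro continuous_intros continuous_on_tensor_vec continuous_on_tensor_form
        continuous_on_pnorm \<open>0 < p\<close>) (auto dest: pnorm_eq_0)
qed

lemma bounded_fobj_sphere:
  assumes "0 < p"
  shows "bounded (fobj E s r p ` sphere (0 :: real ^ 'n::finite) 1)"
  by (intro compact_imp_bounded compact_continuous_image compact_sphere
      continuous_on_subset[OF continuous_on_fobj[OF assms]]) auto

lemma uniformly_continuous_on_gradf_sphere:
  assumes "2 \<le> p"
  shows "uniformly_continuous_on (sphere (0 :: real ^ 'n::finite) 1) (gradf E s r p)"
  by (intro compact_uniformly_continuous compact_sphere
      continuous_on_subset[OF continuous_on_gradf[OF assms]]) auto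

lemma csrh_beta_mult_inner_ge:
  fixes d y g :: "real ^ 'n::finite"
  assumes "\<tau> > 0"
  shows "- (norm g)\<^sup>2 / (4 * \<tau>) \<le> csrh_beta \<tau> \<epsilon> d y g * (d \<bullet> g)"
proof -
  define q where "q = d \<bullet> y"
  define t where "t = (d \<bullet> g) / q"
  define \<beta> where "\<beta> = (((\<tau> * (norm y)\<^sup>2 / q) *\<^sub>R d - y) \<bullet> g) / q"
  have \<beta>: "\<beta> * (d \<bullet> g) = \<tau> * (norm y)\<^sup>2 * t\<^sup>2 - (y \<bullet> g) * t"
    unfolding \<beta>_def t_def
    by (cases "q = 0") (simp_all add: inner_diff_left power2_eq_square field_simps)
  have "(y \<bullet> g) * t \<le> \<bar>y \<bullet> g\<bar> * \<bar>t\<bar>" by (metis abs_ge_self abs_mult)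
  also have "\<dots> \<le> norm y * norm g * \<bar>t\<bar>" by (simp add: Cauchy_Schwarz_ineq2 mult_right_mono)
  finally have "\<tau> * (norm y)\<^sup>2 * t\<^sup>2 - norm y * norm g * \<bar>t\<bar> \<le> \<beta> * (d \<bullet> g)"
    unfolding \<beta> by simp
  moreover have "4 * \<tau> * (\<tau> * (norm y)\<^sup>2 * t\<^sup>2 - norm y * norm g * \<bar>t\<bar>)
      = (2 * \<tau> * norm y * \<bar>t\<bar> - norm g)\<^sup>2 - (norm g)\<^sup>2"
    by (simp add: power2_eq_square algebra_simps abs_mult_self_eq)
  ultimately have "- (norm g)\<^sup>2 \<le> 4 * \<tau> * (\<beta> * (d \<bullet> g))"
    using assms by (smt (verit) mult_left_mono zero_le_power2)
  then have \<beta>_ge: "- (norm g)\<^sup>2 / (4 * \<tau>) \<le> \<beta> * (d \<bullet> g)"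
    using assms pos_divide_le_eq[of "4 * \<tau>" "- (norm g)\<^sup>2"] by (simp add: mult.commute)
  have "csrh_beta \<tau> \<epsilon> d y g = 0 \<or> csrh_beta \<tau> \<epsilon> d y g = \<beta>"
    unfolding csrh_beta_def \<beta>_def q_def by auto
  then show ?thesis
    using \<beta>_ge assms by (auto simp: divide_nonpos_pos)
qed

lemma abs_csrh_beta_mult_norm_le:
  fixes d y g :: "real ^ 'n::finite"
  assumes "\<tau> > 0" "\<epsilon> > 0"
  shows "\<bar>csrh_beta \<tau> \<epsilon> d y g\<bar> * norm d \<le> (\<tau> / \<epsilon>\<^sup>2 + 1 / \<epsilon>) * norm g"
proof (cases "csrh_beta \<tau> \<epsilon> d y g = 0")
  case False
  define q where "q = d \<bullet> y"
  define \<rho> where "\<rho> = norm y * norm d / \<bar>q\<bar>"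
  have q: "q \<noteq> 0" "\<epsilon> * norm d * norm y \<le> \<bar>q\<bar>"
    and \<beta>: "csrh_beta \<tau> \<epsilon> d y g = (\<tau> * (norm y)\<^sup>2 * (d \<bullet> g) / q - y \<bullet> g) / q"
    using False unfolding csrh_beta_def q_def
    by (auto split: if_splits simp: inner_diff_left max_def)
  have \<rho>: "0 \<le> \<rho>" "\<rho> \<le> 1 / \<epsilon>"
    using q assms by (auto simp: \<rho>_def field_simps)
  have "\<bar>\<tau> * (norm y)\<^sup>2 * (d \<bullet> g) / q - y \<bullet> g\<bar>
      \<le> \<tau> * (norm y)\<^sup>2 * (norm d * norm g) / \<bar>q\<bar> + norm y * norm g"
    using assms Cauchy_Schwarz_ineq2[of d g] Cauchy_Schwarz_ineq2[of y g]
    by (intro order_trans[OF abs_triangle_ineq4] add_mono)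
      (auto simp: abs_mult abs_divide intro!: divide_right_mono mult_left_mono)
  then have "\<bar>csrh_beta \<tau> \<epsilon> d y g\<bar> * norm d
      \<le> (\<tau> * (norm y)\<^sup>2 * (norm d * norm g) / \<bar>q\<bar> + norm y * norm g) * norm d / \<bar>q\<bar>"
    unfolding \<beta> abs_divide by (simp add: divide_right_mono mult_right_mono)
  also have "\<dots> = \<tau> * norm g * \<rho>\<^sup>2 + norm g * \<rho>"
    unfolding \<rho>_def using q by (simp add: power2_eq_square field_simps)
  also have "\<dots> \<le> \<tau> * norm g * (1 / \<epsilon>)\<^sup>2 + norm g * (1 / \<epsilon>)"
    using \<rho> assms by (intro add_mono mult_left_mono power_mono) auto
  finally show ?thesis by (simp add: power2_eq_square algebra_simps)
qed (use assms in simp)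

lemma csrh_direction_ascent:
  fixes d y g :: "real ^ 'n::finite"
  assumes "\<tau> > 0"
  shows "(1 - 1 / (4 * \<tau>)) * (norm g)\<^sup>2 \<le> g \<bullet> (g + csrh_beta \<tau> \<epsilon> d y g *\<^sub>R d)"
  using csrh_beta_mult_inner_ge[OF assms, of g \<epsilon> d y]
  by (simp add: inner_add_right inner_commute power2_norm_eq_inner algebra_simps)

lemma norm_csrh_direction_le:
  fixes d y g :: "real ^ 'n::finite"
  assumes "\<tau> > 0" "\<epsilon> > 0"
  shows "norm (g + csrh_beta \<tau> \<epsilon> d y g *\<^sub>R d) \<le> (1 + \<tau> / \<epsilon>\<^sup>2 + 1 / \<epsilon>) * norm g"
  using norm_triangle_ineq[of g "csrh_beta \<tau> \<epsilon> d y g *\<^sub>R d"]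
    abs_csrh_beta_mult_norm_le[OF assms, of d y g]
  by (simp add: algebra_simps)

lemma csrh_runD:
  assumes "csrh_run E s r p c1 c2 \<tau> \<epsilon> x \<alpha> pd"
  shows "norm (x 0) = 1" and "pd 0 = gradf E s r p (x 0)" and "0 < \<alpha> k"
    and "fobj E s r p (x k) + c1 * \<alpha> k * (gradf E s r p (x k) \<bullet> pd k) \<le> fobj E s r p (x (Suc k))"
    and "gradf E s r p (x (Suc k)) \<bullet> pd k \<le> c2 * (gradf E s r p (x k) \<bullet> pd k)"
    and "x (Suc k) = csrh_step (x k) (pd k) (\<alpha> k)"
    and "pd (Suc k) = gradf E s r p (x (Suc k)) +
      csrh_beta \<tau> \<epsilon> (x (Suc k) - x k) (gradf E s r p (x (Suc k)) - gradf E s r p (x k))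
        (gradf E s r p (x (Suc k))) *\<^sub>R (x (Suc k) - x k)"
  using assms unfolding csrh_run_def by auto

lemma csrh_run_norm:
  assumes "csrh_run E s r p c1 c2 \<tau> \<epsilon> x \<alpha> pd"
  shows "norm (x k) = 1"
  by (induction k) (simp_all add: csrh_runD[OF assms] norm_csrh_step)

lemma csrh_run_step_le:
  assumes "csrh_run E s r p c1 c2 \<tau> \<epsilon> x \<alpha> pd"
  shows "norm (x (Suc k) - x k) \<le> \<alpha> k * norm (pd k)"
  using norm_csrh_step_diff_le[OF csrh_run_norm[OF assms]] csrh_runD[OF assms]
  by (metis abs_of_pos)

lemma csrh_run_ascent:
  assumes "csrh_run E s r p c1 c2 \<tau> \<epsilon> x \<alpha> pd" and "0 < \<tau>"
  shows "(1 - 1 / (4 * \<tau>)) * (norm (gradf E s r p (x k)))\<^sup>2 \<le> gradf E s r p (x k) \<bullet> pd k"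
proof (cases k)
  case 0
  have "(1 - 1 / (4 * \<tau>)) * (norm (gradf E s r p (x 0)))\<^sup>2 \<le> (norm (gradf E s r p (x 0)))\<^sup>2"
    using \<open>0 < \<tau>\<close> mult_right_mono[of "1 - 1 / (4 * \<tau>)" 1] by simp
  then show ?thesis using 0 csrh_runD(2)[OF assms(1)] by (simp add: power2_norm_eq_inner)
qed (simp add: csrh_runD(7)[OF assms(1)] csrh_direction_ascent[OF \<open>0 < \<tau>\<close>])

lemma csrh_run_direction_le:
  assumes "csrh_run E s r p c1 c2 \<tau> \<epsilon> x \<alpha> pd" and "0 < \<tau>" "0 < \<epsilon>"
  shows "norm (pd k) \<le> (1 + \<tau> / \<epsilon>\<^sup>2 + 1 / \<epsilon>) * norm (gradf E s r p (x k))"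
proof (cases k)
  case 0
  have "1 \<le> 1 + \<tau> / \<epsilon>\<^sup>2 + 1 / \<epsilon>" using assms by simp
  then show ?thesis
    using 0 csrh_runD(2)[OF assms(1)] mult_right_mono[of 1 _ "norm (pd 0)"] by simp
qed (simp add: csrh_runD(7)[OF assms(1)] norm_csrh_direction_le[OF assms(2,3)])

lemma summable_csrh_run:
  assumes run: "csrh_run E s r p c1 c2 \<tau> \<epsilon> x \<alpha> pd"
    and "2 \<le> p" "0 < c1" "1/4 < \<tau>"
  shows "summable (\<lambda>k. \<alpha> k * (norm (gradf E s r p (x k)))\<^sup>2)"
proof -
  define g where "g k = gradf E s r p (x k)" for k
  define \<theta> where "\<theta> = 1 - 1 / (4 * \<tau>)"
  have "0 < \<tau>" and "0 < \<theta>" using assms(4) by (simp_all add: \<theta>_def field_simps)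
  obtain B where "\<And>y. y \<in> fobj E s r p ` sphere 0 1 \<Longrightarrow> \<bar>y\<bar> \<le> B"
    using bounded_fobj_sphere[of p E s r] assms(2) unfolding bounded_iff by auto
  then have B: "fobj E s r p (x k) \<le> B" for k using csrh_run_norm[OF run, of k] by force
  have "c1 * \<theta> * (\<alpha> k * (norm (g k))\<^sup>2) \<le> c1 * \<alpha> k * (g k \<bullet> pd k)" for k
    using mult_left_mono[OF csrh_run_ascent[OF run \<open>0 < \<tau>\<close>, of k, folded \<theta>_def g_def], of "c1 * \<alpha> k"]
      csrh_runD(3)[OF run, of k] assms(3)
    by (simp add: mult_ac)
  then have increase:
      "fobj E s r p (x k) + c1 * \<theta> * (\<alpha> k * (norm (g k))\<^sup>2) \<le> fobj E s r p (x (Suc k))" for k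
    using csrh_runD(4)[OF run, of k, folded g_def] by (smt (verit))
  have "0 \<le> c1 * \<theta> * (\<alpha> k * (norm (g k))\<^sup>2)" for k
    using assms(3) \<open>0 < \<theta>\<close> csrh_runD(3)[OF run, of k] by (simp add: less_imp_le)
  from summable_of_bounded_ascent[where v = "\<lambda>k. fobj E s r p (x k)"
      and a = "\<lambda>k. c1 * \<theta> * (\<alpha> k * (norm (g k))\<^sup>2)", OF increase this B]
  show ?thesis
    using assms(3) \<open>0 < \<theta>\<close> unfolding g_def by (subst (asm) summable_cmult_iff) auto
qed

theorem theorem4p1:
  fixes E :: "('n::finite) set set" and s :: "'n set \<Rightarrow> real" and r p :: nat
    and c1 c2 \<tau> \<epsilon> :: real
    and x :: "nat \<Rightarrow> real ^ 'n" and \<alpha> :: "nat \<Rightarrow> real" and pd :: "nat \<Rightarrow> real ^ 'n"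
  assumes "r \<ge> 2" and "p \<ge> 2"
    and "\<forall>e\<in>E. card e = r" and "\<forall>e\<in>E. s e > 0"
    and "0 < c1" and "c1 < c2" and "c2 < 1"
    and "1/4 < \<tau>" and "\<tau> < 1" and "\<epsilon> > 0"
    and "csrh_run E s r p c1 c2 \<tau> \<epsilon> x \<alpha> pd"
    and "\<forall>k. gradf E s r p (x k) \<noteq> 0"
  shows "(\<lambda>k. norm (gradf E s r p (x k))) \<longlonglongrightarrow> 0"
proof -
  note run = assms(11)
  have "0 < \<tau>" and "0 < 1 - 1 / (4 * \<tau>)" using assms(8) by (simp_all add: field_simps)
  moreover have "0 < 1 + \<tau> / \<epsilon>\<^sup>2 + 1 / \<epsilon>" using assms(8,10) by (simp add: add_pos_pos)
  ultimately show ?thesis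
    using gradient_tendsto_zero_of_curvature[where G = "gradf E s r p" and x = x and pd = pd,
        OF uniformly_continuous_on_gradf_sphere[OF assms(2)] _ _ assms(7) _
        summable_csrh_run[OF run assms(2,5,8)] csrh_run_ascent[OF run]
        csrh_run_direction_le[OF run _ assms(10)] csrh_runD(5)[OF run]
        csrh_run_step_le[OF run] csrh_runD(3)[OF run]]
      csrh_run_norm[OF run]
    by simp
qed

end
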